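(* Let $p\ge2$ and $m\ge1$ be integers and $d=2p$. There exist $W\in\mathbb{R}^{2p\times p}$ and $V\in\mathbb{R}^{p\times 2p}$ such that the sine network $s^\theta(x)=V\sin(Wx)$ satisfies, for every $x\in\mathcal{X}_m$, $s^\theta_{y(x)}(x)=p$ and $s^\theta_q(x)=0$ for all $q\ne y(x)$ (so $h_\theta(x)=y(x)$ with margin $p$), and moreover $\|V\|_2=\sqrt p$ and $\|W\|_F\le\pi\sqrt2\,p$.
   Context: Let $[p]=\{0,\dots,p-1\}$ and $\mathcal{X}_m=\{x\in\{0,\dots,m\}^p:\|x\|_1=m\}$, coordinates indexed by $[p]$; $y(x)=(\sum_{r\in[p]}r\,x_r)\bmod p$. $\sin$ is applied entrywise. The predictor is $h_\theta(x)=\ell$ if $s^\theta_\ell(x)>s^\theta_k(x)$ for all $k\ne\ell$, and $\bot$ otherwise. $\|V\|_2$ is the spectral norm and $\|W\|_F$ the Frobenius norm. *)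

theory Defs
  imports "HOL-Analysis.Analysis"
begin

text \<open>Matrices of varying size are represented as functions nat => nat => real;
  only entries with row index < rows and column index < cols are relevant.
  Vectors in R^n are functions nat => real with coordinates 0..n-1.\<close>

definition Xset :: "nat \<Rightarrow> nat \<Rightarrow> (nat \<Rightarrow> nat) set" where
  "Xset p m = {x. (\<forall>r<p. x r \<le> m) \<and> (\<forall>r\<ge>p. x r = 0) \<and> (\<Sum>r<p. x r) = m}"

definition ylabel :: "nat \<Rightarrow> (nat \<Rightarrow> nat) \<Rightarrow> nat" where
  "ylabel p x = (\<Sum>r<p. r * x r) mod p"

definition sine_net :: "nat \<Rightarrow> (nat \<Rightarrow> nat \<Rightarrow> real) \<Rightarrow> (nat \<Rightarrow> nat \<Rightarrow> real)
    \<Rightarrow> (nat \<Rightarrow> nat) \<Rightarrow> nat \<Rightarrow> real" where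
  "sine_net p W V x q = (\<Sum>k<2*p. V q k * sin (\<Sum>j<p. W k j * real (x j)))"

definition predictor :: "nat \<Rightarrow> (nat \<Rightarrow> real) \<Rightarrow> nat option" where
  "predictor p s = (if \<exists>l<p. \<forall>k<p. k \<noteq> l \<longrightarrow> s l > s k
                    then Some (THE l. l < p \<and> (\<forall>k<p. k \<noteq> l \<longrightarrow> s l > s k)) else None)"

definition vnorm :: "nat \<Rightarrow> (nat \<Rightarrow> real) \<Rightarrow> real" where
  "vnorm n v = sqrt (\<Sum>j<n. (v j)\<^sup>2)"

definition spec_norm :: "nat \<Rightarrow> nat \<Rightarrow> (nat \<Rightarrow> nat \<Rightarrow> real) \<Rightarrow> real" where
  "spec_norm r c A = Sup {vnorm r (\<lambda>i. \<Sum>j<c. A i j * v j) | v. vnorm c v = 1}"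

definition frob_norm :: "nat \<Rightarrow> nat \<Rightarrow> (nat \<Rightarrow> nat \<Rightarrow> real) \<Rightarrow> real" where
  "frob_norm r c A = sqrt (\<Sum>i<r. \<Sum>j<c. (A i j)\<^sup>2)"

end

theory Submission
  imports Defs
begin

(* Row pair (2i, 2i+1) of W computes the phases 2 pi i S/p and 2 pi i S/p + pi/2, where
   S = sum_r r x_r: the offset pi/(2m) in every column adds up to pi/2 because |x|_1 = m.
   Hence sin (W x) is the Fourier feature vector (sin, cos)(2 pi i S/p), i < p, and V, whose
   row q is the same vector at q, outputs sum_i cos (2 pi i (S - q)/p), a sum over p-th roots
   of unity that equals p if q = S mod p and 0 otherwise. In particular the rows of V are
   orthogonal of squared length p, so |V|_2 = sqrt p. Reducing every weight modulo 2 pi into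
   [-pi, pi] leaves sin (W x) unchanged, x being integral, and bounds |W|_F by pi sqrt (2 p^2). *)

lemma sum_lessThan_double:
  fixes f :: "nat \<Rightarrow> 'a::comm_monoid_add"
  shows "(\<Sum>k<2*n. f k) = (\<Sum>i<n. f (2*i) + f (2*i+1))"
  by (induction n) (simp_all add: algebra_simps)

lemma sum_cos_roots_of_unity:
  fixes p :: nat and n :: int
  assumes "p > 0"
  shows "(\<Sum>k<p. cos (2*pi * real k * of_int n / real p)) = (if int p dvd n then real p else 0)"
proof (cases "int p dvd n")
  case True
  then obtain t where n: "n = int p * t" by blast
  have "cos (2*pi * real k * of_int n / real p) = 1" for k
  proof -
    have "2*pi * real k * of_int n / real p = 2*pi * of_int (int k * t)"
      using assms by (simp add: n field_simps)
    then show ?thesis by (metis cos_int_2pin)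
  qed
  then show ?thesis using True by simp
next
  case False
  define z where "z = cis (2*pi * of_int n / real p)"
  have "z \<noteq> 1"
  proof
    assume "z = 1"
    then have "cos (2*pi * of_int n / real p) = 1"
      by (metis Re_complex_of_real cis.sel(1) of_real_1 z_def)
    then obtain N :: int where "2*pi * of_int n / real p = of_int N * 2 * pi"
      using cos_one_2pi_int by blast
    then have "of_int n = real p * of_int N" using assms by (simp add: field_simps)
    then have "n = int p * N" by (metis of_int_eq_iff of_int_mult of_int_of_nat_eq)
    with False show False by simp
  qed
  moreover have "z ^ p = 1"
    using assms by (simp add: z_def Complex.DeMoivre)
  ultimately have "Re (\<Sum>k<p. z ^ k) = 0"
    by (simp add: geometric_sum)
  moreover have "Re (z ^ k) = cos (2*pi * real k * of_int n / real p)" for k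
    by (simp add: z_def Complex.DeMoivre field_simps)
  ultimately show ?thesis using False by simp
qed

lemma bessel_inequality:
  fixes R :: "nat \<Rightarrow> nat \<Rightarrow> real"
  assumes c: "c > 0"
    and orth: "\<And>q q'. q < r \<Longrightarrow> q' < r \<Longrightarrow> (\<Sum>k<n. R q k * R q' k) = (if q = q' then c else 0)"
  shows "(\<Sum>q<r. (\<Sum>k<n. R q k * v k)\<^sup>2) \<le> c * (\<Sum>k<n. (v k)\<^sup>2)"
proof -
  define u where "u q = (\<Sum>k<n. R q k * v k)" for q
  define U where "U = (\<Sum>q<r. (u q)\<^sup>2)"
  define w where "w k = (\<Sum>q<r. u q * R q k)" for k
  have vw: "(\<Sum>k<n. v k * w k) = U"
  proof -
    have "(\<Sum>k<n. v k * w k) = (\<Sum>q<r. \<Sum>k<n. u q * (R q k * v k))"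
      unfolding w_def by (subst sum.swap) (simp add: sum_distrib_left mult_ac)
    also have "\<dots> = U"
      by (simp add: U_def u_def power2_eq_square sum_distrib_left)
    finally show ?thesis .
  qed
  have ww: "(\<Sum>k<n. (w k)\<^sup>2) = c * U"
  proof -
    have "(\<Sum>k<n. (w k)\<^sup>2) = (\<Sum>q<r. \<Sum>q'<r. u q * u q' * (\<Sum>k<n. R q k * R q' k))"
      unfolding w_def power2_eq_square
      by (simp add: sum_distrib_left sum_distrib_right mult_ac sum.swap[of _ "{..<n}"])
    also have "\<dots> = (\<Sum>q<r. \<Sum>q'<r. if q = q' then c * (u q)\<^sup>2 else 0)"
      by (intro sum.cong refl) (simp add: orth power2_eq_square)
    finally show ?thesis by (simp add: U_def sum_distrib_left)
  qed
  have "0 \<le> (\<Sum>k<n. (v k - w k / c)\<^sup>2)"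
    by (simp add: sum_nonneg)
  also have "\<dots> = (\<Sum>k<n. (v k)\<^sup>2) - 2/c * (\<Sum>k<n. v k * w k) + (\<Sum>k<n. (w k)\<^sup>2) / c\<^sup>2"
    by (simp add: power2_diff power_divide sum.distrib sum_subtractf sum_distrib_left
        sum_divide_distrib mult_ac)
  also have "\<dots> = (\<Sum>k<n. (v k)\<^sup>2) - U / c"
    unfolding vw ww using c by (simp add: power2_eq_square field_simps)
  finally show ?thesis
    using c by (simp add: U_def u_def field_simps)
qed

lemma spec_norm_orthogonal_rows:
  fixes A :: "nat \<Rightarrow> nat \<Rightarrow> real"
  assumes r: "r > 0" and c: "c > 0"
    and orth: "\<And>q q'. q < r \<Longrightarrow> q' < r \<Longrightarrow> (\<Sum>k<n. A q k * A q' k) = (if q = q' then c else 0)"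
  shows "spec_norm r n A = sqrt c"
proof -
  define N where "N = {vnorm r (\<lambda>i. \<Sum>j<n. A i j * v j) | v. vnorm n v = 1}"
  have upper: "a \<le> sqrt c" if "a \<in> N" for a
  proof -
    obtain v where v: "vnorm n v = 1" and a: "a = vnorm r (\<lambda>i. \<Sum>j<n. A i j * v j)"
      using \<open>a \<in> N\<close> unfolding N_def by blast
    have "(\<Sum>j<n. (v j)\<^sup>2) = 1"
      using v unfolding vnorm_def by simp
    with bessel_inequality[OF c orth, where v=v] show ?thesis
      unfolding a vnorm_def by simp
  qed
  define v0 where "v0 k = A 0 k / sqrt c" for k
  have "vnorm n v0 = 1"
    using c orth[of 0 0] r
    by (simp add: vnorm_def v0_def power_divide power2_eq_square flip: sum_divide_distrib)
  moreover have "vnorm r (\<lambda>i. \<Sum>j<n. A i j * v0 j) = sqrt c"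
  proof -
    have "(\<Sum>j<n. A i j * v0 j) = (\<Sum>j<n. A i j * A 0 j) / sqrt c" for i
      by (simp add: v0_def sum_divide_distrib)
    then have "(\<Sum>j<n. A i j * v0 j)\<^sup>2 = (if i = 0 then c else 0)" if "i < r" for i
      using orth[of i 0] that r c by (simp add: real_div_sqrt)
    then have "(\<Sum>i<r. (\<Sum>j<n. A i j * v0 j)\<^sup>2) = (\<Sum>i<r. if i = 0 then c else 0)"
      by (intro sum.cong) auto
    also have "\<dots> = c"
      using r by simp
    finally show ?thesis
      by (simp add: vnorm_def)
  qed
  ultimately have "sqrt c \<in> N"
    unfolding N_def by force
  then have "Sup N = sqrt c"
    by (rule cSup_eq_maximum) (use upper in auto)
  then show ?thesis
    unfolding spec_norm_def N_def .
qed

lemma frob_norm_le_entry_bound: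
  fixes A :: "nat \<Rightarrow> nat \<Rightarrow> real"
  assumes "b \<ge> 0" and "\<And>i j. i < r \<Longrightarrow> j < c \<Longrightarrow> \<bar>A i j\<bar> \<le> b"
  shows "frob_norm r c A \<le> b * sqrt (real (r * c))"
proof -
  have "(A i j)\<^sup>2 \<le> b\<^sup>2" if "i < r" "j < c" for i j
    using power_mono[OF assms(2)[OF that] abs_ge_zero, of 2] by simp
  then have "(\<Sum>i<r. \<Sum>j<c. (A i j)\<^sup>2) \<le> (\<Sum>i<r. \<Sum>j<c. b\<^sup>2)"
    by (intro sum_mono) auto
  also have "\<dots> = (b * sqrt (real (r * c)))\<^sup>2"
    by (simp add: power_mult_distrib)
  finally show ?thesis
    unfolding frob_norm_def using assms(1) by (simp add: real_le_lsqrt)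
qed

lemma predictor_indicator:
  assumes "y < p" and "c > 0" and s: "\<And>q. q < p \<Longrightarrow> s q = (if q = y then c else 0)"
  shows "predictor p s = Some y"
proof -
  define strict_max where "strict_max l \<longleftrightarrow> l < p \<and> (\<forall>k<p. k \<noteq> l \<longrightarrow> s l > s k)" for l
  have y: "strict_max y"
    using assms by (simp add: strict_max_def)
  have "l = y" if "strict_max l" for l
  proof (rule ccontr)
    assume "l \<noteq> y"
    with that have "l < p" and "s y < s l"
      using \<open>y < p\<close> unfolding strict_max_def by blast+
    with \<open>l \<noteq> y\<close> show False
      using s[of l] s[of y] \<open>y < p\<close> \<open>c > 0\<close> by simp
  qed
  with y have "(THE l. strict_max l) = y"
    by (rule the_equality)
  moreover have "predictor p s = (if \<exists>l<p. strict_max l then Some (THE l. strict_max l) else None)"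
    unfolding predictor_def strict_max_def by simp
  ultimately show ?thesis
    using y \<open>y < p\<close> by auto
qed

definition wrap_angle :: "real \<Rightarrow> real" where
  "wrap_angle t = t - 2*pi * of_int (round (t / (2*pi)))"

lemma abs_wrap_angle_le: "\<bar>wrap_angle t\<bar> \<le> pi"
proof -
  have "\<bar>wrap_angle t\<bar> = 2*pi * \<bar>of_int (round (t / (2*pi))) - t / (2*pi)\<bar>"
    by (simp add: wrap_angle_def abs_minus_commute flip: abs_mult_pos[OF pi_ge_zero]) (simp add: field_simps)
  also have "\<dots> \<le> 2*pi * (1/2)"
    by (intro mult_left_mono of_int_round_abs_le) simp
  finally show ?thesis by simp
qed

lemma sin_sum_wrap_angle:
  "sin (\<Sum>j\<in>A. wrap_angle (f j) * real (x j)) = sin (\<Sum>j\<in>A. f j * real (x j))"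
proof -
  define M where "M = (\<Sum>j\<in>A. round (f j / (2*pi)) * int (x j))"
  have "(\<Sum>j\<in>A. wrap_angle (f j) * real (x j)) = (\<Sum>j\<in>A. f j * real (x j)) - 2*pi * of_int M"
    by (simp add: M_def wrap_angle_def algebra_simps sum_subtractf sum_distrib_left)
  then show ?thesis by (simp add: sin_diff)
qed

definition fourier_feature :: "nat \<Rightarrow> real \<Rightarrow> nat \<Rightarrow> real" where
  "fourier_feature p t k =
     (if even k then sin (2*pi * real (k div 2) * t / real p) else cos (2*pi * real (k div 2) * t / real p))"

lemma fourier_feature_inner:
  assumes "p > 0"
  shows "(\<Sum>k<2*p. fourier_feature p (real a) k * fourier_feature p (real b) k)
           = (if a mod p = b mod p then real p else 0)"
proof -
  have "(\<Sum>k<2*p. fourier_feature p (real a) k * fourier_feature p (real b) k)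
      = (\<Sum>k<p. cos (2*pi * real k * of_int (int a - int b) / real p))"
  proof (subst sum_lessThan_double, intro sum.cong refl)
    fix k
    have "2*pi * real k * of_int (int a - int b) / real p
        = 2*pi * real k * real a / real p - 2*pi * real k * real b / real p"
      using assms by (simp add: field_simps)
    then show "fourier_feature p (real a) (2*k) * fourier_feature p (real b) (2*k)
        + fourier_feature p (real a) (2*k+1) * fourier_feature p (real b) (2*k+1)
        = cos (2*pi * real k * of_int (int a - int b) / real p)"
      by (simp add: fourier_feature_def cos_diff)
  qed
  also have "\<dots> = (if a mod p = b mod p then real p else 0)"
    using sum_cos_roots_of_unity[OF assms, of "int a - int b"] by (simp flip: mod_eq_dvd_iff zmod_int)
  finally show ?thesis .
qed

definition sine_weights :: "nat \<Rightarrow> nat \<Rightarrow> nat \<Rightarrow> nat \<Rightarrow> real" where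
  "sine_weights p m k j =
     wrap_angle (2*pi * real (k div 2) / real p * real j + (if odd k then pi / (2 * real m) else 0))"

lemma sin_sine_weights:
  assumes "m \<ge> 1" and "x \<in> Xset p m"
  shows "sin (\<Sum>j<p. sine_weights p m k j * real (x j)) = fourier_feature p (real (\<Sum>r<p. r * x r)) k"
proof -
  define a where "a = 2*pi * real (k div 2) / real p"
  define \<phi> where "\<phi> = (if odd k then pi / (2 * real m) else 0)"
  have "(\<Sum>j<p. real (x j)) = real m"
    using assms(2) unfolding Xset_def by (simp flip: of_nat_sum)
  have "(\<Sum>j<p. (a * real j + \<phi>) * real (x j))
      = a * (\<Sum>j<p. real j * real (x j)) + \<phi> * (\<Sum>j<p. real (x j))"
    by (simp add: sum.distrib sum_distrib_left algebra_simps)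
  also have "\<dots> = a * real (\<Sum>r<p. r * x r) + (if odd k then pi/2 else 0)"
    using assms(1) \<open>(\<Sum>j<p. real (x j)) = real m\<close> by (simp add: \<phi>_def)
  finally show ?thesis
    unfolding sine_weights_def sin_sum_wrap_angle a_def[symmetric] \<phi>_def[symmetric]
    by (simp add: fourier_feature_def a_def sin_add)
qed

lemma sine_net_sine_weights:
  assumes "p > 0" and "m \<ge> 1" and "x \<in> Xset p m" and "q < p"
  shows "sine_net p (sine_weights p m) (\<lambda>q. fourier_feature p (real q)) x q
           = (if q = ylabel p x then real p else 0)"
proof -
  have "sine_net p (sine_weights p m) (\<lambda>q. fourier_feature p (real q)) x q
      = (if q mod p = (\<Sum>r<p. r * x r) mod p then real p else 0)"
    unfolding sine_net_def sin_sine_weights[OF assms(2,3)] by (rule fourier_feature_inner[OF assms(1)])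
  then show ?thesis
    using assms(4) by (simp add: ylabel_def)
qed

lemma spec_norm_fourier_features:
  assumes "p > 0"
  shows "spec_norm p (2*p) (\<lambda>q. fourier_feature p (real q)) = sqrt (real p)"
  using assms by (intro spec_norm_orthogonal_rows) (simp_all add: fourier_feature_inner)

lemma frob_norm_sine_weights: "frob_norm (2*p) p (sine_weights p m) \<le> pi * sqrt 2 * real p"
proof -
  have "frob_norm (2*p) p (sine_weights p m) \<le> pi * sqrt (real (2*p * p))"
    by (rule frob_norm_le_entry_bound) (simp_all add: sine_weights_def abs_wrap_angle_le)
  also have "\<dots> = pi * sqrt 2 * real p"
    by (simp add: real_sqrt_mult)
  finally show ?thesis .
qed

theorem mainTheorem12:
  fixes p m :: nat
  assumes "p \<ge> 2" and "m \<ge> 1"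
  shows "\<exists>W V :: nat \<Rightarrow> nat \<Rightarrow> real.
           (\<forall>x\<in>Xset p m.
              (\<forall>q<p. sine_net p W V x q = (if q = ylabel p x then real p else 0))
              \<and> predictor p (sine_net p W V x) = Some (ylabel p x))
         \<and> spec_norm p (2*p) V = sqrt (real p)
         \<and> frob_norm (2*p) p W \<le> pi * sqrt 2 * real p"
proof (intro exI conjI ballI allI impI)
  have p: "p > 0"
    using assms(1) by simp
  fix x assume x: "x \<in> Xset p m"
  show scores: "sine_net p (sine_weights p m) (\<lambda>q. fourier_feature p (real q)) x q
      = (if q = ylabel p x then real p else 0)" if "q < p" for q
    by (rule sine_net_sine_weights[OF p assms(2) x that])
  show "predictor p (sine_net p (sine_weights p m) (\<lambda>q. fourier_feature p (real q)) x) = Some (ylabel p x)"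
    using p by (intro predictor_indicator[OF _ _ scores]) (simp_all add: ylabel_def)
next
  show "spec_norm p (2*p) (\<lambda>q. fourier_feature p (real q)) = sqrt (real p)"
    using assms(1) by (intro spec_norm_fourier_features) simp
  show "frob_norm (2*p) p (sine_weights p m) \<le> pi * sqrt 2 * real p"
    by (rule frob_norm_sine_weights)
qed

end
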